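(* Let $\Delta\subseteq\mathbb{R}^d$ be a Delzant polytope. Then $\Upsilon(\Delta)$ equals the facet width of $\Delta$.
   Context: A Delzant polytope is a full-dimensional polytope $\Delta\subseteq\mathbb{R}^d$ whose normal fan consists of unimodular cones, i.e. at each vertex the primitive inner normals of the incident facets form a basis of $(\mathbb{Z}^d)^*$. Write the facets as $\{x\in\Delta:\langle u_k,x\rangle=-\phi_k\}$, $k=1,\dots,m$, with $u_k\in(\mathbb{Z}^d)^*$ primitive inner facet normals and $\phi_k\in\mathbb{R}$. $\Upsilon(\Delta)$ is the minimum of all positive values $\sum_k a_k\phi_k$ where $a_k$ are nonnegative integers with $\sum_k a_ku_k=0$. For $u\ne0$, $\mathrm{width}_u(\Delta)=\max_{x,y\in\Delta}|u(x)-u(y)|$; the facet width of $\Delta$ is $\min_k \mathrm{width}_{u_k}(\Delta)$ over the facet normals $u_k$. *)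

theory Defs
  imports "HOL-Analysis.Analysis"
begin

text \<open>Integral vectors in the lattice Z^d (dual lattice identified with Z^d via the inner product).\<close>
definition integral_vec :: "real^'d \<Rightarrow> bool" where
  "integral_vec u \<longleftrightarrow> (\<forall>i. u $ i \<in> \<int>)"

definition primitive_vec :: "real^'d \<Rightarrow> bool" where
  "primitive_vec u \<longleftrightarrow> integral_vec u \<and> u \<noteq> 0 \<and>
     (\<forall>n::nat. n > 1 \<longrightarrow> \<not> integral_vec ((1 / real n) *\<^sub>R u))"

definition facet_normal :: "(real^'d) set \<Rightarrow> (real^'d) set \<Rightarrow> real^'d \<Rightarrow> bool" where
  "facet_normal P F u \<longleftrightarrow> primitive_vec u \<and>
     (\<exists>c. (\<forall>x\<in>P. c \<le> u \<bullet> x) \<and> F = {x \<in> P. u \<bullet> x = c})"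

definition lattice_basis :: "(real^'d) set \<Rightarrow> bool" where
  "lattice_basis B \<longleftrightarrow> finite B \<and> card B = CARD('d) \<and> (\<forall>b\<in>B. integral_vec b) \<and>
     (\<forall>w. integral_vec w \<longrightarrow> (\<exists>a :: real^'d \<Rightarrow> int. w = (\<Sum>b\<in>B. of_int (a b) *\<^sub>R b)))"

definition delzant :: "(real^'d) set \<Rightarrow> bool" where
  "delzant P \<longleftrightarrow> polytope P \<and> aff_dim P = int CARD('d) \<and>
     (\<forall>F. F facet_of P \<longrightarrow> (\<exists>u. facet_normal P F u)) \<and>
     (\<forall>v. v extreme_point_of P \<longrightarrow>
        lattice_basis {u. \<exists>F. F facet_of P \<and> v \<in> F \<and> facet_normal P F u})"

definition fnormal :: "(real^'d) set \<Rightarrow> (real^'d) set \<Rightarrow> real^'d" where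
  "fnormal P F = (THE u. facet_normal P F u)"

definition fphi :: "(real^'d) set \<Rightarrow> (real^'d) set \<Rightarrow> real" where
  "fphi P F = - (THE c. F = {x \<in> P. fnormal P F \<bullet> x = c} \<and> (\<forall>x\<in>P. c \<le> fnormal P F \<bullet> x))"

definition Upsilon :: "(real^'d) set \<Rightarrow> real" where
  "Upsilon P = Inf {s. s > 0 \<and> (\<exists>a :: (real^'d) set \<Rightarrow> nat.
       (\<Sum>F\<in>{F. F facet_of P}. real (a F) *\<^sub>R fnormal P F) = 0 \<and>
       s = (\<Sum>F\<in>{F. F facet_of P}. real (a F) * fphi P F))}"

definition width_dir :: "real^'d \<Rightarrow> (real^'d) set \<Rightarrow> real" where
  "width_dir u P = Sup {\<bar>u \<bullet> x - u \<bullet> y\<bar> | x y. x \<in> P \<and> y \<in> P}"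

definition facet_width :: "(real^'d) set \<Rightarrow> real" where
  "facet_width P = Inf {width_dir (fnormal P F) P | F. F facet_of P}"

end

theory Submission
  imports Defs
begin

text \<open>
  Write \<open>s\<^sub>F(x) = \<langle>u\<^sub>F, x\<rangle> + \<phi>\<^sub>F\<close> for the slack of a facet \<open>F\<close>; the polytope is
  \<open>{x. \<forall>F. s\<^sub>F(x) \<ge> 0}\<close> and \<open>s\<^sub>F\<close> vanishes exactly on \<open>F\<close>. If \<open>\<Sum> a\<^sub>F u\<^sub>F = 0\<close>, then
  \<open>\<Sum> a\<^sub>F \<phi>\<^sub>F = \<Sum> a\<^sub>F s\<^sub>F(x)\<close> for every \<open>x\<close>; evaluated at a point where \<open>u\<^sub>F\<close> is maximal for
  some \<open>F\<close> with \<open>a\<^sub>F > 0\<close>, this is at least \<open>s\<^sub>F(x) = width\<^bsub>u\<^sub>F\<^esub>\<close>.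

  Conversely, let \<open>v\<close> be a vertex at which \<open>u\<^sub>F\<^sub>0\<close> is maximal. The normals of the facets
  through \<open>v\<close> form a lattice basis, so \<open>-u\<^sub>F\<^sub>0\<close> is an integer combination of them. Its
  coefficients are nonnegative: moving from \<open>v\<close> along the dual direction of a negative
  coefficient stays inside the polytope and increases \<open>u\<^sub>F\<^sub>0\<close>. Adding \<open>F\<^sub>0\<close> with weight one
  gives a balanced combination whose value is \<open>s\<^sub>F\<^sub>0(v) = width\<^bsub>u\<^sub>F\<^sub>0\<^esub>\<close>.
\<close>

section \<open>Facets of full-dimensional polyhedra\<close>

lemma affine_hull_eq_hyperplane:
  fixes C :: "'a::euclidean_space set"
  assumes "a \<noteq> 0" "C \<subseteq> {x. a \<bullet> x = b}" "aff_dim C = int DIM('a) - 1"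
  shows "affine hull C = {x. a \<bullet> x = b}"
proof (rule affine_dim_equal)
  show "affine hull C \<noteq> {}" using assms(3) by auto
  show "affine hull C \<subseteq> {x. a \<bullet> x = b}"
    using assms(2) by (intro hull_minimal) (auto simp: affine_hyperplane)
qed (use assms in \<open>simp_all add: affine_hyperplane aff_dim_hyperplane of_nat_diff\<close>)

lemma hyperplane_eq_imp_scaled:
  fixes a a' :: "'a::real_inner"
  assumes "a \<noteq> 0" and eq: "{x. a \<bullet> x = b} = {x. a' \<bullet> x = b'}"
  shows "\<exists>l. a' = l *\<^sub>R a \<and> b' = l * b"
proof -
  define p where "p = (b / (a \<bullet> a)) *\<^sub>R a"
  define l where "l = (a' \<bullet> a) / (a \<bullet> a)"
  define z where "z = a' - l *\<^sub>R a"
  have aa: "a \<bullet> a \<noteq> 0" using assms(1) by simp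
  have "a \<bullet> p = b" using aa by (simp add: p_def)
  moreover from this have "a' \<bullet> p = b'" using eq by blast
  ultimately have p: "a \<bullet> p = b" "a' \<bullet> p = b'" .
  have az: "a \<bullet> z = 0" using aa by (simp add: z_def l_def inner_diff_right inner_commute)
  \<comment> \<open>\<open>p + z\<close> lies on the hyperplane, so the component \<open>z\<close> of \<open>a'\<close> orthogonal to \<open>a\<close> vanishes.\<close>
  have "a \<bullet> (p + z) = b" using p az by (simp add: inner_add_right)
  then have "a' \<bullet> (p + z) = b'" using eq by blast
  then have "a' \<bullet> z = 0" using p by (simp add: inner_add_right)
  then have "z \<bullet> z = 0" using az by (simp add: z_def inner_diff_left)
  then have "a' = l *\<^sub>R a" by (simp add: z_def)
  with p show ?thesis by auto
qed

lemma full_dim_not_subset_hyperplane: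
  fixes S :: "'a::euclidean_space set"
  assumes "aff_dim S = DIM('a)" "a \<noteq> 0"
  shows "\<not> S \<subseteq> {x. a \<bullet> x = b}"
proof
  assume "S \<subseteq> {x. a \<bullet> x = b}"
  then have "aff_dim S \<le> aff_dim {x. a \<bullet> x = b}" by (rule aff_dim_subset)
  with assms show False by (simp add: aff_dim_hyperplane)
qed

lemma facet_supporting_halfspace_unique:
  fixes S :: "'a::euclidean_space set"
  assumes S: "aff_dim S = DIM('a)" and F: "F facet_of S"
    and a: "a \<noteq> 0" "S \<subseteq> {x. a \<bullet> x \<le> b}" "F \<subseteq> {x. a \<bullet> x = b}"
    and a': "a' \<noteq> 0" "S \<subseteq> {x. a' \<bullet> x \<le> b'}" "F \<subseteq> {x. a' \<bullet> x = b'}"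
  shows "\<exists>l>0. a' = l *\<^sub>R a \<and> b' = l * b"
proof -
  have dim: "aff_dim F = int DIM('a) - 1" using F S by (simp add: facet_of_def)
  have "{x. a \<bullet> x = b} = affine hull F"
    using affine_hull_eq_hyperplane[OF a(1,3) dim] by (rule sym)
  also have "\<dots> = {x. a' \<bullet> x = b'}"
    using affine_hull_eq_hyperplane[OF a'(1,3) dim] .
  finally have "\<exists>l. a' = l *\<^sub>R a \<and> b' = l * b"
    by (rule hyperplane_eq_imp_scaled[OF a(1)])
  then obtain l where l: "a' = l *\<^sub>R a" "b' = l * b" by blast
  have "l > 0"
  proof (rule ccontr)
    assume "\<not> l > 0"
    moreover have "l \<noteq> 0" using l(1) a'(1) by force
    ultimately have "l < 0" by simp
    have "a \<bullet> x = b" if "x \<in> S" for x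
    proof -
      have "a' \<bullet> x \<le> b'" using a'(2) that by blast
      then have "l * (a \<bullet> x) \<le> l * b" using l by simp
      then have "b \<le> a \<bullet> x" using \<open>l < 0\<close> by (simp add: mult_le_cancel_left_neg)
      moreover have "a \<bullet> x \<le> b" using a(2) that by blast
      ultimately show ?thesis by simp
    qed
    then have "S \<subseteq> {x. a \<bullet> x = b}" by blast
    then show False using full_dim_not_subset_hyperplane[OF S a(1)] by blast
  qed
  with l show ?thesis by blast
qed

lemma mem_full_dim_polyhedron_if_facet_halfspaces:
  fixes S :: "'a::euclidean_space set"
  assumes "polyhedron S" "aff_dim S = DIM('a)"
    and halfspaces: "\<And>C a b. \<lbrakk>C facet_of S; a \<noteq> 0; S \<subseteq> {x. a \<bullet> x \<le> b}; C = S \<inter> {x. a \<bullet> x = b}\<rbrakk>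
      \<Longrightarrow> a \<bullet> x \<le> b"
  shows "x \<in> S"
proof -
  obtain H where fin: "finite H" and S: "S = affine hull S \<inter> \<Inter>H"
    and "\<And>h. h \<in> H \<Longrightarrow> \<exists>a b. a \<noteq> 0 \<and> h = {x. a \<bullet> x \<le> b}"
    and min: "\<And>H'. H' \<subset> H \<Longrightarrow> S \<subset> affine hull S \<inter> \<Inter>H'"
    using assms(1) by (simp add: polyhedron_Int_affine_minimal) meson
  then obtain a b where ab: "\<And>h. h \<in> H \<Longrightarrow> a h \<noteq> 0 \<and> h = {x. a h \<bullet> x \<le> b h}"
    by metis
  have "x \<in> h" if h: "h \<in> H" for h
  proof -
    have "S \<inter> {x. a h \<bullet> x = b h} facet_of S"
      using facet_of_polyhedron_explicit[OF fin S ab min] h by blast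
    moreover have "S \<subseteq> {x. a h \<bullet> x \<le> b h}" using S ab h by blast
    ultimately have "a h \<bullet> x \<le> b h" using halfspaces ab h by blast
    with ab h show ?thesis by blast
  qed
  moreover have "affine hull S = UNIV" using assms(2) by (simp add: aff_dim_eq_full)
  ultimately show ?thesis by (subst S) blast
qed

lemma compact_convex_attains_max_at_extreme_point:
  fixes S :: "'a::euclidean_space set"
  assumes "compact S" "convex S" "S \<noteq> {}"
  obtains v where "v extreme_point_of S" "\<And>y. y \<in> S \<Longrightarrow> u \<bullet> y \<le> u \<bullet> v"
proof -
  have "continuous_on S (\<lambda>y. u \<bullet> y)" by (intro continuous_intros)
  then obtain m where m: "m \<in> S" "\<And>y. y \<in> S \<Longrightarrow> u \<bullet> y \<le> u \<bullet> m"
    using continuous_attains_sup[OF assms(1,3)] by metis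
  define G where "G = S \<inter> {x. u \<bullet> x = u \<bullet> m}"
  have G: "G face_of S"
    unfolding G_def using assms m by (intro face_of_Int_supporting_hyperplane_le) auto
  moreover have "G \<noteq> {}" using m by (auto simp: G_def)
  moreover have "compact G" using face_of_imp_compact[OF assms(2,1) G] .
  moreover have "convex G" using face_of_imp_convex[OF G] .
  ultimately obtain v where "v extreme_point_of G"
    using extreme_point_exists_convex by blast
  then have "v extreme_point_of S" "v \<in> G" using extreme_point_of_face[OF G] by auto
  then show ?thesis using that m by (auto simp: G_def)
qed

section \<open>Primitive vectors and lattice bases\<close>

lemma primitive_vec_coprime_multiple:
  fixes u w :: "real^'d"
  assumes u: "primitive_vec u" and w: "integral_vec w"
    and eq: "of_int q *\<^sub>R w = of_int p *\<^sub>R u" and "coprime p q" "q > 0"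
  shows "q = 1"
proof (rule ccontr)
  assume "q \<noteq> 1"
  with \<open>q > 0\<close> have q: "nat q > 1" by simp
  have "((1 / real (nat q)) *\<^sub>R u) $ j \<in> \<int>" for j
  proof -
    obtain U W where UW: "u $ j = of_int U" "w $ j = of_int W"
      using u w unfolding primitive_vec_def integral_vec_def by (metis Ints_cases)
    have "real_of_int (q * W) = of_int (p * U)"
      using arg_cong[OF eq, of "\<lambda>v. v $ j"] UW by simp
    then have "q dvd p * U" by (metis dvd_triv_left of_int_eq_iff)
    then obtain k where "U = q * k"
      using \<open>coprime p q\<close> by (metis coprime_commute coprime_dvd_mult_right_iff dvdE)
    then show ?thesis using \<open>q > 0\<close> UW by simp
  qed
  then have "integral_vec ((1 / real (nat q)) *\<^sub>R u)" by (simp add: integral_vec_def)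
  with u q show False unfolding primitive_vec_def by blast
qed

lemma primitive_vec_scaleR_eq_1:
  fixes u :: "real^'d"
  assumes u: "primitive_vec u" and lu: "primitive_vec (l *\<^sub>R u)" and "l > 0"
  shows "l = 1"
proof -
  obtain i where "u $ i \<noteq> 0" using u by (auto simp: primitive_vec_def vec_eq_iff)
  then have "l = (l *\<^sub>R u) $ i / u $ i" by simp
  moreover have "(l *\<^sub>R u) $ i \<in> \<rat>" "u $ i \<in> \<rat>"
    using u lu Ints_subset_Rats unfolding primitive_vec_def integral_vec_def by blast+
  ultimately have "l \<in> \<rat>" by (metis Rats_divide)
  then obtain p q :: int where q: "q > 0" and "coprime p q" and l: "l = of_int p / of_int q"
    by (rule Rats_cases')
  with \<open>l > 0\<close> have "p > 0" by (simp add: zero_less_divide_iff)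
  have "of_int q *\<^sub>R (l *\<^sub>R u) = of_int p *\<^sub>R u" using q l by simp
  with u lu \<open>coprime p q\<close> q have "q = 1"
    by (intro primitive_vec_coprime_multiple[of u "l *\<^sub>R u"]) (auto simp: primitive_vec_def)
  moreover have "p = 1"
    using lu u \<open>coprime p q\<close> \<open>p > 0\<close> \<open>of_int q *\<^sub>R (l *\<^sub>R u) = of_int p *\<^sub>R u\<close>
    by (intro primitive_vec_coprime_multiple[of "l *\<^sub>R u" u p q])
      (auto simp: primitive_vec_def coprime_commute)
  ultimately show ?thesis using l by simp
qed

lemma lattice_basis_span:
  assumes "lattice_basis (B :: (real^'d) set)"
  shows "span B = UNIV"
proof -
  have "axis i 1 \<in> span B" for i :: 'd
  proof -
    have "integral_vec (axis i (1::real))" by (simp add: integral_vec_def axis_def)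
    then obtain c :: "real^'d \<Rightarrow> int" where "axis i 1 = (\<Sum>b\<in>B. of_int (c b) *\<^sub>R b)"
      using assms unfolding lattice_basis_def by blast
    then show ?thesis by (simp add: span_sum span_scale span_base)
  qed
  then have "Basis \<subseteq> span B" by (auto simp: Basis_vec_def)
  then show ?thesis using span_Basis span_minimal subspace_span by blast
qed

lemma lattice_basis_dual_vector:
  fixes B :: "(real^'d) set"
  assumes B: "lattice_basis B" and "w0 \<in> B"
  obtains z where "w0 \<bullet> z > 0" "\<And>w. w \<in> B - {w0} \<Longrightarrow> w \<bullet> z = 0"
proof -
  have fin: "finite B" and card: "card B = CARD('d)" using B by (auto simp: lattice_basis_def)
  have "w0 \<notin> span (B - {w0})"
  proof
    assume "w0 \<in> span (B - {w0})"
    then have "B \<subseteq> span (B - {w0})" by (auto intro: span_base)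
    then have "span (B - {w0}) = UNIV"
      using lattice_basis_span[OF B] span_minimal subspace_span by blast
    then have "CARD('d) \<le> card (B - {w0})"
      using dim_le_card'[of "B - {w0}"] dim_span[of "B - {w0}"] fin by (simp add: dim_UNIV)
    moreover have "card (B - {w0}) = CARD('d) - 1"
      using card \<open>w0 \<in> B\<close> by (simp add: card_Diff_singleton)
    moreover have "CARD('d) > 0" by simp
    ultimately show False by linarith
  qed
  \<comment> \<open>The component of \<open>w0\<close> orthogonal to the span of the other basis vectors is the dual vector.\<close>
  obtain y z where y: "y \<in> span (B - {w0})" and z: "\<And>w. w \<in> span (B - {w0}) \<Longrightarrow> orthogonal z w"
    and w0: "w0 = y + z"
    using orthogonal_subspace_decomp_exists by blast
  have "z \<noteq> 0" using w0 y \<open>w0 \<notin> span (B - {w0})\<close> by auto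
  moreover have "y \<bullet> z = 0" using z[OF y] by (simp add: orthogonal_def inner_commute)
  ultimately have "w0 \<bullet> z > 0" using w0 by (simp add: inner_add_left)
  moreover have "w \<bullet> z = 0" if "w \<in> B - {w0}" for w
    using z[OF span_base[OF that]] by (simp add: orthogonal_def inner_commute)
  ultimately show ?thesis using that by blast
qed

section \<open>Facets of a Delzant polytope\<close>

definition facet_slack :: "(real^'d) set \<Rightarrow> (real^'d) set \<Rightarrow> real^'d \<Rightarrow> real" where
  "facet_slack P F x = fnormal P F \<bullet> x + fphi P F"

definition Upsilon_values :: "(real^'d) set \<Rightarrow> real set" where
  "Upsilon_values P = {s. s > 0 \<and> (\<exists>a :: (real^'d) set \<Rightarrow> nat.
       (\<Sum>F\<in>{F. F facet_of P}. real (a F) *\<^sub>R fnormal P F) = 0 \<and>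
       s = (\<Sum>F\<in>{F. F facet_of P}. real (a F) * fphi P F))}"

locale delzant_polytope =
  fixes P :: "(real^'d) set"
  assumes delzant: "delzant P"
begin

lemma polytope: "polytope P"
  and full_dim: "aff_dim P = DIM(real^'d)"
  using delzant by (simp_all add: delzant_def)

lemma compact: "compact P" and convex: "convex P" and nonempty: "P \<noteq> {}"
  using polytope full_dim by (auto simp: polytope_imp_compact polytope_imp_convex)

lemma finite_facets: "finite {F. F facet_of P}"
  using polytope by (rule finite_polytope_facets)

lemma facet_exists: obtains F where "F facet_of P"
  using polytope_facet_exists[OF polytope] full_dim by auto

lemma facet_normal_unique:
  assumes F: "F facet_of P" and "facet_normal P F u" "facet_normal P F u'"
  shows "u' = u"
proof -
  obtain c c' where c: "P \<subseteq> {x. - u \<bullet> x \<le> - c}" "F \<subseteq> {x. - u \<bullet> x = - c}"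
    and c': "P \<subseteq> {x. - u' \<bullet> x \<le> - c'}" "F \<subseteq> {x. - u' \<bullet> x = - c'}"
    and u: "primitive_vec u" "primitive_vec u'"
    using assms by (auto simp: facet_normal_def)
  then have "- u \<noteq> 0" "- u' \<noteq> 0" by (auto simp: primitive_vec_def)
  then have "\<exists>l>0. - u' = l *\<^sub>R - u \<and> - c' = l * - c"
    using facet_supporting_halfspace_unique[OF full_dim F _ c _ c'] by simp
  then obtain l where "l > 0" "- u' = l *\<^sub>R - u" by blast
  moreover from this have "l = 1" using u primitive_vec_scaleR_eq_1 by simp
  ultimately show ?thesis by simp
qed

lemma facet_normal_fnormal:
  assumes "F facet_of P"
  shows "facet_normal P F (fnormal P F)"
proof -
  obtain u where u: "facet_normal P F u" using delzant assms unfolding delzant_def by blast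
  show ?thesis
    unfolding fnormal_def
    by (rule theI[where P = "facet_normal P F", OF u]) (rule facet_normal_unique[OF assms u])
qed

lemma fphi_eq:
  assumes F: "F facet_of P" and "F = {x \<in> P. fnormal P F \<bullet> x = c}" "\<forall>x\<in>P. c \<le> fnormal P F \<bullet> x"
  shows "fphi P F = - c"
proof -
  obtain y where y: "y \<in> F" using F by (auto simp: facet_of_def)
  have "(THE c. F = {x \<in> P. fnormal P F \<bullet> x = c} \<and> (\<forall>x\<in>P. c \<le> fnormal P F \<bullet> x)) = c"
  proof (rule the_equality)
    fix c' assume "F = {x \<in> P. fnormal P F \<bullet> x = c'} \<and> (\<forall>x\<in>P. c' \<le> fnormal P F \<bullet> x)"
    then have "fnormal P F \<bullet> y = c'" using y by blast
    moreover have "fnormal P F \<bullet> y = c" using y assms(2) by blast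
    ultimately show "c' = c" by simp
  qed (use assms in blast)
  then show ?thesis by (simp add: fphi_def)
qed

lemma facet_supporting_level:
  assumes F: "F facet_of P"
  obtains c where "F = {x \<in> P. fnormal P F \<bullet> x = c}" "\<forall>x\<in>P. c \<le> fnormal P F \<bullet> x"
    "\<And>x. facet_slack P F x = fnormal P F \<bullet> x - c"
proof -
  obtain c where c: "F = {x \<in> P. fnormal P F \<bullet> x = c}" "\<forall>x\<in>P. c \<le> fnormal P F \<bullet> x"
    using facet_normal_fnormal[OF F] unfolding facet_normal_def by blast
  moreover have "facet_slack P F x = fnormal P F \<bullet> x - c" for x
    using fphi_eq[OF F c] by (simp add: facet_slack_def)
  ultimately show ?thesis using that by blast
qed

lemma facet_slack_nonneg: "F facet_of P \<Longrightarrow> x \<in> P \<Longrightarrow> 0 \<le> facet_slack P F x"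
  by (metis facet_supporting_level diff_ge_0_iff_ge)

lemma mem_facet_iff: "F facet_of P \<Longrightarrow> x \<in> F \<longleftrightarrow> x \<in> P \<and> facet_slack P F x = 0"
  by (rule facet_supporting_level) auto

lemma inj_on_fnormal: "inj_on (fnormal P) {F. F facet_of P}"
proof (rule inj_onI, clarsimp)
  fix F G assume F: "F facet_of P" and G: "G facet_of P" and eq: "fnormal P F = fnormal P G"
  \<comment> \<open>\<open>- fphi\<close> is the minimum of the common normal over \<open>P\<close>, attained on either facet.\<close>
  obtain x y where x: "x \<in> F" "x \<in> P" and y: "y \<in> G" "y \<in> P"
    using F G facet_of_imp_subset by (fastforce simp: facet_of_def)
  have "facet_slack P F x = 0" "facet_slack P G y = 0"
    using mem_facet_iff F G x y by blast+
  moreover have "0 \<le> facet_slack P G x" "0 \<le> facet_slack P F y"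
    using facet_slack_nonneg F G x y by blast+
  ultimately have "fphi P F = fphi P G" using eq by (simp add: facet_slack_def)
  then have "facet_slack P F = facet_slack P G" using eq by (simp add: facet_slack_def fun_eq_iff)
  then show "F = G" by (simp add: set_eq_iff mem_facet_iff[OF F] mem_facet_iff[OF G])
qed

lemma mem_iff_facet_slack_nonneg: "x \<in> P \<longleftrightarrow> (\<forall>F. F facet_of P \<longrightarrow> 0 \<le> facet_slack P F x)"
proof (intro iffI allI impI)
  assume slack: "\<forall>F. F facet_of P \<longrightarrow> 0 \<le> facet_slack P F x"
  show "x \<in> P"
  proof (rule mem_full_dim_polyhedron_if_facet_halfspaces)
    show "polyhedron P" by (simp add: polytope polytope_imp_polyhedron)
    fix C a b assume C: "C facet_of P" and a: "a \<noteq> 0" "P \<subseteq> {x. a \<bullet> x \<le> b}" "C = P \<inter> {x. a \<bullet> x = b}"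
    have "- fnormal P C \<noteq> 0"
      using facet_normal_fnormal[OF C] by (auto simp: facet_normal_def primitive_vec_def)
    moreover have "P \<subseteq> {x. - fnormal P C \<bullet> x \<le> fphi P C}"
      using facet_slack_nonneg[OF C] by (force simp: facet_slack_def)
    moreover have "C \<subseteq> {x. - fnormal P C \<bullet> x = fphi P C}"
      using mem_facet_iff[OF C] by (force simp: facet_slack_def)
    ultimately have "\<exists>l>0. a = l *\<^sub>R - fnormal P C \<and> b = l * fphi P C"
      using a by (intro facet_supporting_halfspace_unique[OF full_dim C]) auto
    then obtain l where "l > 0" "a = l *\<^sub>R - fnormal P C" "b = l * fphi P C" by blast
    moreover have "- fnormal P C \<bullet> x \<le> fphi P C"
      using slack[rule_format, OF C] by (simp add: facet_slack_def)
    ultimately show "a \<bullet> x \<le> b"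
      using mult_left_mono[of "- (fnormal P C \<bullet> x)" "fphi P C" l] by simp
  qed (use full_dim in simp)
qed (simp add: facet_slack_nonneg)

lemma width_dir_fnormal_eq_facet_slack:
  assumes F: "F facet_of P" and m: "m \<in> P" "\<And>y. y \<in> P \<Longrightarrow> fnormal P F \<bullet> y \<le> fnormal P F \<bullet> m"
  shows "width_dir (fnormal P F) P = facet_slack P F m"
  unfolding width_dir_def
proof (rule cSup_eq_maximum)
  obtain y where "y \<in> F" using F by (auto simp: facet_of_def)
  then have "y \<in> P" "facet_slack P F y = 0" using mem_facet_iff[OF F] by auto
  moreover have "0 \<le> facet_slack P F m" using facet_slack_nonneg[OF F m(1)] .
  ultimately have "facet_slack P F m = \<bar>fnormal P F \<bullet> m - fnormal P F \<bullet> y\<bar>"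
    by (simp add: facet_slack_def)
  then show "facet_slack P F m \<in> {\<bar>fnormal P F \<bullet> x - fnormal P F \<bullet> y\<bar> |x y. x \<in> P \<and> y \<in> P}"
    using m(1) \<open>y \<in> P\<close> by blast
next
  fix t assume "t \<in> {\<bar>fnormal P F \<bullet> x - fnormal P F \<bullet> y\<bar> |x y. x \<in> P \<and> y \<in> P}"
  then obtain x y where t: "t = \<bar>fnormal P F \<bullet> x - fnormal P F \<bullet> y\<bar>" and "x \<in> P" "y \<in> P" by blast
  then have "0 \<le> facet_slack P F x" "0 \<le> facet_slack P F y"
    "fnormal P F \<bullet> x \<le> fnormal P F \<bullet> m" "fnormal P F \<bullet> y \<le> fnormal P F \<bullet> m"
    using facet_slack_nonneg[OF F] m(2) by auto
  then show "t \<le> facet_slack P F m" unfolding t facet_slack_def by linarith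
qed

lemma inner_attains_max: obtains m where "m \<in> P" "\<And>y. y \<in> P \<Longrightarrow> u \<bullet> y \<le> u \<bullet> m"
  using compact_convex_attains_max_at_extreme_point[OF compact convex nonempty]
  by (metis extreme_point_of_def)

lemma width_dir_fnormal_pos:
  assumes F: "F facet_of P"
  shows "0 < width_dir (fnormal P F) P"
proof -
  obtain m where m: "m \<in> P" "\<And>y. y \<in> P \<Longrightarrow> fnormal P F \<bullet> y \<le> fnormal P F \<bullet> m"
    using inner_attains_max[of "fnormal P F"] by blast
  have "facet_slack P F m \<noteq> 0"
  proof
    assume "facet_slack P F m = 0"
    then have "fnormal P F \<bullet> y = - fphi P F" if "y \<in> P" for y
      using facet_slack_nonneg[OF F that] m(2)[OF that] by (simp add: facet_slack_def)
    then have "P \<subseteq> {y. fnormal P F \<bullet> y = - fphi P F}" by blast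
    moreover have "fnormal P F \<noteq> 0"
      using facet_normal_fnormal[OF F] by (simp add: facet_normal_def primitive_vec_def)
    ultimately show False using full_dim_not_subset_hyperplane[OF full_dim] by blast
  qed
  with facet_slack_nonneg[OF F m(1)] width_dir_fnormal_eq_facet_slack[OF F m] show ?thesis
    by simp
qed

lemma sum_fphi_eq_sum_facet_slack:
  assumes "(\<Sum>F\<in>{F. F facet_of P}. a F *\<^sub>R fnormal P F) = 0"
  shows "(\<Sum>F\<in>{F. F facet_of P}. a F * fphi P F) = (\<Sum>F\<in>{F. F facet_of P}. a F * facet_slack P F x)"
proof -
  have "(\<Sum>F\<in>{F. F facet_of P}. a F * facet_slack P F x)
      = (\<Sum>F\<in>{F. F facet_of P}. a F *\<^sub>R fnormal P F) \<bullet> x + (\<Sum>F\<in>{F. F facet_of P}. a F * fphi P F)"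
    by (simp add: facet_slack_def distrib_left sum.distrib inner_sum_left)
  with assms show ?thesis by simp
qed

lemma step_along_feasible_direction:
  assumes v: "v \<in> P" and z: "\<And>G. G facet_of P \<Longrightarrow> v \<in> G \<Longrightarrow> 0 \<le> fnormal P G \<bullet> z"
  obtains d where "d > 0" "v + d *\<^sub>R z \<in> P"
proof -
  have slack_step: "facet_slack P G (v + d *\<^sub>R z) = facet_slack P G v + d * (fnormal P G \<bullet> z)" for G d
    by (simp add: facet_slack_def inner_add_right algebra_simps)
  have "\<forall>\<^sub>F d in at_right 0. 0 \<le> facet_slack P G (v + d *\<^sub>R z)" if G: "G facet_of P" for G
  proof (cases "v \<in> G")
    case True
    then have "facet_slack P G (v + d *\<^sub>R z) = d * (fnormal P G \<bullet> z)" for d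
      using mem_facet_iff[OF G] slack_step by simp
    with z[OF G True] show ?thesis
      by (auto intro: eventually_mono[OF eventually_at_right_less[of 0]])
  next
    case False
    then have "0 < facet_slack P G v"
      using facet_slack_nonneg[OF G v] mem_facet_iff[OF G] v by fastforce
    moreover have "((\<lambda>d. facet_slack P G (v + d *\<^sub>R z)) \<longlongrightarrow> facet_slack P G v) (at_right 0)"
      unfolding slack_step by (auto intro!: tendsto_eq_intros)
    ultimately show ?thesis
      by (rule_tac order_tendstoD(1)[THEN eventually_mono]) auto
  qed
  then have "\<forall>\<^sub>F d in at_right 0. \<forall>G\<in>{G. G facet_of P}. 0 \<le> facet_slack P G (v + d *\<^sub>R z)"
    by (intro eventually_ball_finite[OF finite_facets]) auto
  then have "\<forall>\<^sub>F d in at_right 0. 0 < d \<and> v + d *\<^sub>R z \<in> P"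
    using eventually_at_right_less[of 0] by eventually_elim (auto simp: mem_iff_facet_slack_nonneg)
  then show ?thesis
    using eventually_happens'[OF trivial_limit_at_right_real] that by blast
qed

section \<open>The facet normals at a vertex\<close>

definition vertex_normals :: "real^'d \<Rightarrow> (real^'d) set" where
  "vertex_normals v = fnormal P ` {G. G facet_of P \<and> v \<in> G}"

lemma lattice_basis_vertex_normals:
  assumes "v extreme_point_of P"
  shows "lattice_basis (vertex_normals v)"
proof -
  have "lattice_basis {u. \<exists>G. G facet_of P \<and> v \<in> G \<and> facet_normal P G u}"
    using delzant[unfolded delzant_def, THEN conjunct2, THEN conjunct2, THEN conjunct2] assms by blast
  moreover have "{u. \<exists>G. G facet_of P \<and> v \<in> G \<and> facet_normal P G u} = vertex_normals v"
  proof (intro set_eqI iffI)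
    fix u assume "u \<in> {u. \<exists>G. G facet_of P \<and> v \<in> G \<and> facet_normal P G u}"
    then obtain G where G: "G facet_of P" "v \<in> G" "facet_normal P G u" by blast
    then have "u = fnormal P G" using facet_normal_unique[OF G(1) facet_normal_fnormal[OF G(1)]] by blast
    with G show "u \<in> vertex_normals v" by (auto simp: vertex_normals_def)
  qed (auto simp: vertex_normals_def facet_normal_fnormal)
  ultimately show ?thesis by simp
qed

lemma vertex_cone_coeff_nonneg:
  assumes v: "v extreme_point_of P" and max: "\<And>y. y \<in> P \<Longrightarrow> u \<bullet> y \<le> u \<bullet> v"
    and u: "- u = (\<Sum>w\<in>vertex_normals v. of_int (b w) *\<^sub>R w)" and w0: "w0 \<in> vertex_normals v"
  shows "0 \<le> b w0"
proof (rule ccontr)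
  assume "\<not> 0 \<le> b w0"
  have B: "lattice_basis (vertex_normals v)" using lattice_basis_vertex_normals[OF v] .
  obtain z where z0: "w0 \<bullet> z > 0" and z: "\<And>w. w \<in> vertex_normals v - {w0} \<Longrightarrow> w \<bullet> z = 0"
    using lattice_basis_dual_vector[OF B w0] by blast
  have "- u \<bullet> z = (\<Sum>w\<in>vertex_normals v. of_int (b w) * (w \<bullet> z))"
    unfolding u by (simp add: inner_sum_left)
  also have "\<dots> = of_int (b w0) * (w0 \<bullet> z)"
    using B w0 z by (subst sum.remove) (auto simp: lattice_basis_def)
  finally have "u \<bullet> z > 0"
    using mult_neg_pos[of "of_int (b w0)" "w0 \<bullet> z"] \<open>\<not> 0 \<le> b w0\<close> z0 by simp
  have z_feasible: "0 \<le> fnormal P G \<bullet> z" if "G facet_of P" "v \<in> G" for G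
    using z z0 that by (cases "fnormal P G = w0") (auto simp: vertex_normals_def)
  have "v \<in> P" using v by (simp add: extreme_point_of_def)
  then obtain d where "d > 0" "v + d *\<^sub>R z \<in> P"
    using z_feasible by (rule step_along_feasible_direction)
  moreover have "0 < d * (u \<bullet> z)" using \<open>d > 0\<close> \<open>u \<bullet> z > 0\<close> by simp
  ultimately show False using max[of "v + d *\<^sub>R z"] by (simp add: inner_add_right)
qed

lemma neg_in_vertex_cone:
  assumes v: "v extreme_point_of P" and "integral_vec u" and max: "\<And>y. y \<in> P \<Longrightarrow> u \<bullet> y \<le> u \<bullet> v"
  obtains a :: "(real^'d) set \<Rightarrow> nat"
  where "\<And>G. a G \<noteq> 0 \<Longrightarrow> v \<in> G" "(\<Sum>G\<in>{G. G facet_of P}. real (a G) *\<^sub>R fnormal P G) = - u"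
proof -
  let ?FV = "{G. G facet_of P \<and> v \<in> G}"
  have "integral_vec (- u)" using assms(2) by (simp add: integral_vec_def)
  then obtain b where b: "- u = (\<Sum>w\<in>vertex_normals v. of_int (b w) *\<^sub>R w)"
    using lattice_basis_vertex_normals[OF v] unfolding lattice_basis_def by blast
  define a where "a G = (if G \<in> ?FV then nat (b (fnormal P G)) else 0)" for G
  have "(\<Sum>G\<in>{G. G facet_of P}. real (a G) *\<^sub>R fnormal P G) = (\<Sum>G\<in>?FV. real (a G) *\<^sub>R fnormal P G)"
    by (rule sum.mono_neutral_right[OF finite_facets]) (auto simp: a_def)
  also have "\<dots> = (\<Sum>G\<in>?FV. of_int (b (fnormal P G)) *\<^sub>R fnormal P G)"
    using vertex_cone_coeff_nonneg[OF v max b] by (intro sum.cong) (auto simp: a_def vertex_normals_def)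
  also have "\<dots> = - u"
  proof -
    have "inj_on (fnormal P) ?FV" using inj_on_fnormal by (rule inj_on_subset) blast
    then show ?thesis unfolding b vertex_normals_def by (simp add: sum.reindex)
  qed
  finally show ?thesis using that[of a] by (auto simp: a_def split: if_splits)
qed

lemma Upsilon_sum_attains_width_dir:
  assumes F0: "F0 facet_of P"
  obtains a :: "(real^'d) set \<Rightarrow> nat"
  where "(\<Sum>F\<in>{F. F facet_of P}. real (a F) *\<^sub>R fnormal P F) = 0"
    "(\<Sum>F\<in>{F. F facet_of P}. real (a F) * fphi P F) = width_dir (fnormal P F0) P"
proof -
  obtain v where v: "v extreme_point_of P" and max: "\<And>y. y \<in> P \<Longrightarrow> fnormal P F0 \<bullet> y \<le> fnormal P F0 \<bullet> v"
    using compact_convex_attains_max_at_extreme_point[OF compact convex nonempty] by blast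
  have "integral_vec (fnormal P F0)"
    using facet_normal_fnormal[OF F0] by (simp add: facet_normal_def primitive_vec_def)
  then obtain a where a: "\<And>G. a G \<noteq> 0 \<Longrightarrow> v \<in> G"
    and sum_a: "(\<Sum>G\<in>{G. G facet_of P}. real (a G) *\<^sub>R fnormal P G) = - fnormal P F0"
    using neg_in_vertex_cone[OF v _ max] by blast
  define a' where "a' G = a G + (if G = F0 then 1 else 0)" for G
  have sum_a': "(\<Sum>G\<in>{G. G facet_of P}. real (a' G) *\<^sub>R f G)
      = (\<Sum>G\<in>{G. G facet_of P}. real (a G) *\<^sub>R f G) + f F0"
    for f :: "(real^'d) set \<Rightarrow> 'b::real_vector"
  proof -
    have "real (a' G) *\<^sub>R f G = real (a G) *\<^sub>R f G + (if G = F0 then f G else 0)" for G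
      by (simp add: a'_def scaleR_add_left)
    then show ?thesis using finite_facets F0 by (simp add: sum.distrib)
  qed
  have balanced: "(\<Sum>G\<in>{G. G facet_of P}. real (a' G) *\<^sub>R fnormal P G) = 0"
    using sum_a'[of "fnormal P"] sum_a by simp
  have vP: "v \<in> P" using v by (simp add: extreme_point_of_def)
  have "(\<Sum>G\<in>{G. G facet_of P}. real (a G) * facet_slack P G v) = 0"
  proof (intro sum.neutral ballI)
    fix G assume "G \<in> {G. G facet_of P}"
    then show "real (a G) * facet_slack P G v = 0"
      using a[of G] mem_facet_iff[of G v] vP by (cases "a G = 0") auto
  qed
  then have "(\<Sum>G\<in>{G. G facet_of P}. real (a' G) * fphi P G) = width_dir (fnormal P F0) P"
    using sum_fphi_eq_sum_facet_slack[OF balanced, of v] sum_a'[of "\<lambda>G. facet_slack P G v"]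
      width_dir_fnormal_eq_facet_slack[OF F0 vP max] by simp
  with balanced show ?thesis using that by blast
qed

lemma width_dir_fnormal_le_Upsilon_sum:
  assumes balanced: "(\<Sum>F\<in>{F. F facet_of P}. real (a F) *\<^sub>R fnormal P F) = 0"
    and pos: "0 < (\<Sum>F\<in>{F. F facet_of P}. real (a F) * fphi P F)"
  obtains F where "F facet_of P" "width_dir (fnormal P F) P \<le> (\<Sum>F\<in>{F. F facet_of P}. real (a F) * fphi P F)"
proof -
  from pos have "(\<Sum>F\<in>{F. F facet_of P}. real (a F) * fphi P F) \<noteq> 0" by simp
  then obtain F where "F \<in> {F. F facet_of P}" "real (a F) * fphi P F \<noteq> 0"
    by (rule sum.not_neutral_contains_not_neutral)
  then have F: "F facet_of P" "a F \<noteq> 0" by auto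
  obtain m where m: "m \<in> P" "\<And>y. y \<in> P \<Longrightarrow> fnormal P F \<bullet> y \<le> fnormal P F \<bullet> m"
    using inner_attains_max[of "fnormal P F"] by blast
  have "width_dir (fnormal P F) P = facet_slack P F m"
    using width_dir_fnormal_eq_facet_slack[OF F(1) m] .
  also have "\<dots> \<le> real (a F) * facet_slack P F m"
    using F(2) facet_slack_nonneg[OF F(1) m(1)] by (simp add: mult_le_cancel_right1)
  also have "\<dots> \<le> (\<Sum>G\<in>{G. G facet_of P}. real (a G) * facet_slack P G m)"
    using F(1) facet_slack_nonneg m(1) by (intro member_le_sum finite_facets) auto
  also have "\<dots> = (\<Sum>G\<in>{G. G facet_of P}. real (a G) * fphi P G)"
    using sum_fphi_eq_sum_facet_slack[OF balanced] by simp
  finally show ?thesis using F(1) that by blast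
qed

lemma facet_width_attained:
  obtains F where "F facet_of P" "width_dir (fnormal P F) P = facet_width P"
    and "\<And>G. G facet_of P \<Longrightarrow> facet_width P \<le> width_dir (fnormal P G) P"
proof -
  let ?W = "\<lambda>F. width_dir (fnormal P F) P"
  have widths: "{?W F |F. F facet_of P} = ?W ` {F. F facet_of P}" by blast
  have ne: "?W ` {F. F facet_of P} \<noteq> {}" using facet_exists by blast
  then have facet_width: "facet_width P = Min (?W ` {F. F facet_of P})"
    unfolding facet_width_def widths using finite_facets by (intro cInf_eq_Min) auto
  then have "facet_width P \<in> ?W ` {F. F facet_of P}" using finite_facets ne by simp
  then obtain F where "F facet_of P" "?W F = facet_width P" by auto
  moreover have "facet_width P \<le> ?W G" if "G facet_of P" for G
    unfolding facet_width using finite_facets that by (intro Min_le) auto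
  ultimately show ?thesis using that by blast
qed

lemma facet_width_mem_Upsilon_values: "facet_width P \<in> Upsilon_values P"
proof -
  obtain F where F: "F facet_of P" "width_dir (fnormal P F) P = facet_width P"
    using facet_width_attained by blast
  obtain a where "(\<Sum>G\<in>{G. G facet_of P}. real (a G) *\<^sub>R fnormal P G) = 0"
    "(\<Sum>G\<in>{G. G facet_of P}. real (a G) * fphi P G) = facet_width P"
    by (rule Upsilon_sum_attains_width_dir[OF F(1), unfolded F(2)])
  with width_dir_fnormal_pos[OF F(1)] F(2) show ?thesis
    unfolding Upsilon_values_def by auto
qed

lemma facet_width_le_Upsilon_values:
  assumes "s \<in> Upsilon_values P"
  shows "facet_width P \<le> s"
proof -
  obtain a where balanced: "(\<Sum>G\<in>{G. G facet_of P}. real (a G) *\<^sub>R fnormal P G) = 0"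
    and s: "s = (\<Sum>G\<in>{G. G facet_of P}. real (a G) * fphi P G)" and "s > 0"
    using assms unfolding Upsilon_values_def by blast
  then obtain G where "G facet_of P" "width_dir (fnormal P G) P \<le> s"
    by (auto elim: width_dir_fnormal_le_Upsilon_sum[OF balanced])
  with facet_width_attained show ?thesis by (meson order_trans)
qed

end

theorem lemma3p8:
  fixes P :: "(real^'d) set"
  assumes "delzant P"
  shows "Upsilon P = facet_width P"
proof -
  interpret delzant_polytope P using assms by unfold_locales
  show ?thesis
    unfolding Upsilon_def Upsilon_values_def[symmetric]
    by (rule cInf_eq_minimum) (use facet_width_mem_Upsilon_values facet_width_le_Upsilon_values in auto)
qed

end
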